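(* Let $Q(x_1,\ldots,x_q)$ be a polynomial with integer coefficients. For each $i\in\{1,\ldots,q\}$ let $d_i$ be an upper bound on the degree of $x_i$ in $Q$, let $k_i=\lceil\log(d_i+1)\rceil$, and let $K=\sum_{i=1}^q k_i$. Let $p_{1,1},\ldots,p_{1,k_1},\ldots,p_{q,1},\ldots,p_{q,k_q}$ be $K$ distinct primes, and for each $p_{i,j}$ let $b_{i,j}\in\{0,1\}$ be a bit. For each $i$ let $\pi_i=\sum_{j=1}^{k_i}(-1)^{b_{i,j}}\sqrt{p_{i,j}}$. Then $Q(x_1,\ldots,x_q)\not\equiv 0$ (as a polynomial) if and only if $Q(\pi_1,\ldots,\pi_q)\neq 0$.
   Context: All logarithms $\log$ are to base 2. *)

theory Defs
  imports Complex_Main "HOL-Library.Poly_Mapping" "HOL-Computational_Algebra.Primes"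
begin

text \<open>Multivariate integer polynomials are represented as finitely supported maps
from monomials (exponent vectors, themselves finitely supported maps
nat to nat; variable x_i has index i) to integer coefficients.\<close>

type_synonym int_mpoly = "(nat \<Rightarrow>\<^sub>0 nat) \<Rightarrow>\<^sub>0 int"

definition monom_eval :: "(nat \<Rightarrow>\<^sub>0 nat) \<Rightarrow> (nat \<Rightarrow> real) \<Rightarrow> real" where
  "monom_eval m x = (\<Prod>i\<in>Poly_Mapping.keys m. x i ^ Poly_Mapping.lookup m i)"

definition mpoly_eval :: "int_mpoly \<Rightarrow> (nat \<Rightarrow> real) \<Rightarrow> real" where
  "mpoly_eval Q x = (\<Sum>m\<in>Poly_Mapping.keys Q. real_of_int (Poly_Mapping.lookup Q m) * monom_eval m x)"

end

(* Products of square roots of distinct primes are linearly independent over the rationals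
   (Besicovitch). This is proved by induction along the tower of fields obtained by adjoining
   sqrt p_1, ..., sqrt p_n to the rationals one at a time, showing at each stage that the field is
   closed under inverses and contains no new product of square roots.
   Expanding Q(pi_1, ..., pi_q) and reducing modulo (sqrt t)^2 = t writes it as an integer
   combination of such products, and the same combination gives the value of Q at every point
   obtained from pi by changing the signs of the square roots. So if Q(pi) = 0, then Q vanishes at
   all these points. In coordinate i they take 2^(k_i) > d_i distinct values, so Q vanishes on a
   grid that is larger in every direction than the degree of Q in that variable, and Q = 0. *)

theory Submission
  imports Defs "HOL-Library.FuncSet" "HOL-Computational_Algebra.Polynomial"
begin

section \<open>Square roots of primes\<close>

lemma sqrt_prime_mult_irrational:
  fixes p r :: nat
  assumes "prime p" "\<not> p dvd r"
  shows "sqrt (real (p * r)) \<notin> \<rat>"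
proof
  assume "sqrt (real (p * r)) \<in> \<rat>"
  then obtain m n :: nat where "n \<noteq> 0" and "\<bar>sqrt (real (p * r))\<bar> = m / n"
    and "coprime m n"
    by (rule Rats_abs_nat_div_natE)
  then have "real m = real n * sqrt (real (p * r))"
    by (simp add: field_simps)
  then have "real (m\<^sup>2) = real (p * r * n\<^sup>2)"
    by (simp add: power_mult_distrib)
  then have eq: "m\<^sup>2 = p * r * n\<^sup>2"
    by (simp only: of_nat_eq_iff)
  then have "p dvd m"
    using \<open>prime p\<close> prime_dvd_power by (metis dvd_mult2 dvd_triv_left)
  then obtain l where "m = p * l" ..
  with eq have "p * (p * l\<^sup>2) = p * (r * n\<^sup>2)"
    by (simp add: power2_eq_square algebra_simps)
  then have "p * l\<^sup>2 = r * n\<^sup>2"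
    using prime_gt_0_nat[OF \<open>prime p\<close>] by simp
  then have "p dvd n"
    using assms prime_dvd_mult_iff prime_dvd_power by (metis dvd_triv_left)
  with \<open>p dvd m\<close> \<open>coprime m n\<close> \<open>prime p\<close> show False
    using not_prime_unit coprime_common_divisor by blast
qed

definition sqrt_prod :: "nat set \<Rightarrow> real" where
  "sqrt_prod S = (\<Prod>t\<in>S. sqrt (real t))"

lemma sqrt_prod_eq_sqrt_Prod: "finite S \<Longrightarrow> sqrt_prod S = sqrt (real (\<Prod>S))"
  unfolding sqrt_prod_def by (induction S rule: finite_induct) (auto simp: real_sqrt_mult)

lemma sqrt_prod_insert:
  "finite S \<Longrightarrow> p \<notin> S \<Longrightarrow> sqrt_prod (insert p S) = sqrt (real p) * sqrt_prod S"
  unfolding sqrt_prod_def by simp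

lemma sqrt_prod_irrational:
  assumes "finite T" "t \<in> T" "\<forall>t\<in>T. prime t"
  shows "sqrt_prod T \<notin> \<rat>"
proof -
  have "\<not> t dvd \<Prod>(T - {t})"
    using assms by (auto simp: prime_dvd_prod_iff) (metis primes_dvd_imp_eq)
  moreover have "\<Prod>T = t * \<Prod>(T - {t})"
    using assms by (simp add: prod.remove)
  ultimately show ?thesis
    using assms sqrt_prime_mult_irrational[of t] sqrt_prod_eq_sqrt_Prod[of T] by metis
qed

fun sqrt_field :: "nat list \<Rightarrow> real set" where
  "sqrt_field [] = \<rat>"
| "sqrt_field (p # ps) = {a + b * sqrt (real p) | a b. a \<in> sqrt_field ps \<and> b \<in> sqrt_field ps}"

declare sqrt_field.simps(2) [simp del]

lemma sqrt_field_ConsI: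
  "a \<in> sqrt_field ps \<Longrightarrow> b \<in> sqrt_field ps \<Longrightarrow> a + b * sqrt (real p) \<in> sqrt_field (p # ps)"
  unfolding sqrt_field.simps by blast

lemma sqrt_field_ConsE:
  assumes "x \<in> sqrt_field (p # ps)"
  obtains a b where "x = a + b * sqrt (real p)" "a \<in> sqrt_field ps" "b \<in> sqrt_field ps"
  using assms unfolding sqrt_field.simps by blast

lemma sqrt_field_Rats: "x \<in> \<rat> \<Longrightarrow> x \<in> sqrt_field ps"
proof (induction ps arbitrary: x)
  case (Cons p ps)
  then show ?case
    using sqrt_field_ConsI[of x ps 0 p] by simp
qed simp

lemma sqrt_field_Cons: "x \<in> sqrt_field ps \<Longrightarrow> x \<in> sqrt_field (p # ps)"
  using sqrt_field_ConsI[of x ps 0 p] sqrt_field_Rats[of 0] by simp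

lemma sqrt_field_add: "x \<in> sqrt_field ps \<Longrightarrow> y \<in> sqrt_field ps \<Longrightarrow> x + y \<in> sqrt_field ps"
proof (induction ps arbitrary: x y)
  case (Cons p ps)
  obtain a b c d where "x = a + b * sqrt (real p)" "y = c + d * sqrt (real p)"
    and "a \<in> sqrt_field ps" "b \<in> sqrt_field ps" "c \<in> sqrt_field ps" "d \<in> sqrt_field ps"
    using Cons.prems by (metis sqrt_field_ConsE)
  then show ?case
    using Cons.IH sqrt_field_ConsI[of "a + c" ps "b + d" p] by (simp add: algebra_simps)
qed auto

lemma sqrt_field_uminus: "x \<in> sqrt_field ps \<Longrightarrow> - x \<in> sqrt_field ps"
proof (induction ps arbitrary: x)
  case (Cons p ps)
  obtain a b where "x = a + b * sqrt (real p)" "a \<in> sqrt_field ps" "b \<in> sqrt_field ps"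
    using Cons.prems by (rule sqrt_field_ConsE)
  then show ?case
    using Cons.IH sqrt_field_ConsI[of "- a" ps "- b" p] by simp
qed auto

lemma sqrt_field_diff: "x \<in> sqrt_field ps \<Longrightarrow> y \<in> sqrt_field ps \<Longrightarrow> x - y \<in> sqrt_field ps"
  using sqrt_field_add sqrt_field_uminus by (metis diff_conv_add_uminus)

lemma sqrt_field_mult: "x \<in> sqrt_field ps \<Longrightarrow> y \<in> sqrt_field ps \<Longrightarrow> x * y \<in> sqrt_field ps"
proof (induction ps arbitrary: x y)
  case (Cons p ps)
  obtain a b c d where xy: "x = a + b * sqrt (real p)" "y = c + d * sqrt (real p)"
    and abcd: "a \<in> sqrt_field ps" "b \<in> sqrt_field ps" "c \<in> sqrt_field ps" "d \<in> sqrt_field ps"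
    using Cons.prems by (metis sqrt_field_ConsE)
  have "real p \<in> sqrt_field ps"
    by (simp add: sqrt_field_Rats)
  then have "a * c + real p * (b * d) \<in> sqrt_field ps" "a * d + b * c \<in> sqrt_field ps"
    using abcd by (simp_all add: sqrt_field_add Cons.IH)
  then have "(a * c + real p * (b * d)) + (a * d + b * c) * sqrt (real p) \<in> sqrt_field (p # ps)"
    by (rule sqrt_field_ConsI)
  moreover have "x * y = (a * c + real p * (b * d)) + (a * d + b * c) * sqrt (real p)"
    unfolding xy by (simp add: algebra_simps flip: power2_eq_square)
  ultimately show ?case
    by simp
qed simp

lemma sqrt_field_sum:
  "(\<And>a. a \<in> A \<Longrightarrow> f a \<in> sqrt_field ps) \<Longrightarrow> sum f A \<in> sqrt_field ps"
  by (induction A rule: infinite_finite_induct) (auto intro: sqrt_field_Rats sqrt_field_add)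

lemma sqrt_field_prod:
  "(\<And>a. a \<in> A \<Longrightarrow> f a \<in> sqrt_field ps) \<Longrightarrow> prod f A \<in> sqrt_field ps"
  by (induction A rule: infinite_finite_induct) (auto intro: sqrt_field_Rats sqrt_field_mult)

lemma sqrt_in_sqrt_field: "p \<in> set ps \<Longrightarrow> sqrt (real p) \<in> sqrt_field ps"
proof (induction ps)
  case (Cons a ps)
  show ?case
  proof (cases "p = a")
    case True
    then show ?thesis
      using sqrt_field_ConsI[of 0 ps 1 a] sqrt_field_Rats[of 0] sqrt_field_Rats[of 1] by simp
  next
    case False
    then show ?thesis
      using Cons sqrt_field_Cons by simp
  qed
qed simp

lemma sqrt_prod_in_sqrt_field: "S \<subseteq> set ps \<Longrightarrow> sqrt_prod S \<in> sqrt_field ps"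
  unfolding sqrt_prod_def by (rule sqrt_field_prod) (auto intro: sqrt_in_sqrt_field)

lemma sqrt_field_divide:
  assumes "\<And>z. z \<in> sqrt_field ps \<Longrightarrow> z \<noteq> 0 \<Longrightarrow> inverse z \<in> sqrt_field ps"
    and "x \<in> sqrt_field ps" "y \<in> sqrt_field ps"
  shows "x / y \<in> sqrt_field ps"
  using assms sqrt_field_mult[of x ps "inverse y"] sqrt_field_Rats[of 0]
  by (cases "y = 0") (simp_all add: divide_inverse)

lemma sqrt_field_Cons_inverse:
  assumes inverse: "\<And>y. y \<in> sqrt_field ps \<Longrightarrow> y \<noteq> 0 \<Longrightarrow> inverse y \<in> sqrt_field ps"
    and sqrt_notin: "sqrt (real p) \<notin> sqrt_field ps"
    and x: "x \<in> sqrt_field (p # ps)" "x \<noteq> 0"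
  shows "inverse x \<in> sqrt_field (p # ps)"
proof -
  define s where "s = sqrt (real p)"
  obtain a b where ab: "x = a + b * s" "a \<in> sqrt_field ps" "b \<in> sqrt_field ps"
    using x(1) unfolding s_def by (rule sqrt_field_ConsE)
  show ?thesis
  proof (cases "b = 0")
    case True
    then show ?thesis
      using ab x(2) inverse sqrt_field_Cons by simp
  next
    case False
    have sq: "s * s = real p"
      unfolding s_def by simp
    define N where "N = a * a - (s * s) * (b * b)"
    have N: "N \<in> sqrt_field ps"
      unfolding N_def sq using ab by (simp add: sqrt_field_diff sqrt_field_mult sqrt_field_Rats)
    have "N \<noteq> 0"
    proof
      assume "N = 0"
      then have "(a / b)\<^sup>2 = s\<^sup>2"
        using False by (simp add: N_def field_simps power2_eq_square)
      then have "s = a / b \<or> s = - (a / b)"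
        by (auto simp: power2_eq_iff)
      moreover have "a / b \<in> sqrt_field ps"
        using ab False by (simp add: sqrt_field_divide[OF inverse])
      ultimately have "s \<in> sqrt_field ps"
        using sqrt_field_uminus by auto
      then show False
        using sqrt_notin by (simp add: s_def)
    qed
    moreover have "(a + b * s) * (a - b * s) = N"
      unfolding N_def by algebra
    ultimately have "x * ((a - b * s) / N) = 1"
      unfolding ab(1) by (metis times_divide_eq_right divide_self)
    then have "inverse x = a / N + (- b / N) * s"
      by (simp add: inverse_unique diff_divide_distrib)
    moreover have "a / N \<in> sqrt_field ps" "- b / N \<in> sqrt_field ps"
      using ab N \<open>N \<noteq> 0\<close> by (simp_all add: sqrt_field_divide[OF inverse] sqrt_field_uminus)
    ultimately show ?thesis
      using sqrt_field_ConsI[of "a / N" ps "- b / N" p] by (simp only: s_def)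
  qed
qed

lemma sqrt_prod_notin_sqrt_field_Cons:
  assumes inverse: "\<And>y. y \<in> sqrt_field ps \<Longrightarrow> y \<noteq> 0 \<Longrightarrow> inverse y \<in> sqrt_field ps"
    and notin: "\<And>U. finite U \<Longrightarrow> U \<noteq> {} \<Longrightarrow> \<forall>t\<in>U. prime t \<Longrightarrow> U \<inter> set ps = {} \<Longrightarrow>
      sqrt_prod U \<notin> sqrt_field ps"
    and p: "prime p" "p \<notin> set ps"
    and T: "finite T" "T \<noteq> {}" "\<forall>t\<in>T. prime t" "T \<inter> set (p # ps) = {}"
  shows "sqrt_prod T \<notin> sqrt_field (p # ps)"
proof
  define s where "s = sqrt (real p)"
  have sq: "s * s = real p"
    unfolding s_def by simp
  have s_notin: "s \<notin> sqrt_field ps"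
    using notin[of "{p}"] p by (simp add: s_def sqrt_prod_def)
  assume "sqrt_prod T \<in> sqrt_field (p # ps)"
  then obtain a b where ab: "sqrt_prod T = a + b * s" "a \<in> sqrt_field ps" "b \<in> sqrt_field ps"
    unfolding s_def by (rule sqrt_field_ConsE)
  consider "b = 0" | "a = 0" | "a \<noteq> 0" "b \<noteq> 0"
    by blast
  then show False
  proof cases
    case 1
    then show False
      using ab notin[of T] T by simp
  next
    case 2
    have "sqrt_prod (insert p T) = s * (b * s)"
      using T ab 2 by (simp add: s_def sqrt_prod_insert)
    also have "\<dots> = real p * b"
      using sq by (simp add: algebra_simps)
    finally have "sqrt_prod (insert p T) \<in> sqrt_field ps"
      using ab by (simp add: sqrt_field_mult sqrt_field_Rats)
    then show False
      using notin[of "insert p T"] T p by auto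
  next
    case 3
    have "real (\<Prod>T) = sqrt_prod T * sqrt_prod T"
      using T by (simp add: sqrt_prod_eq_sqrt_Prod del: of_nat_prod)
    also have "\<dots> = (a * a + real p * (b * b)) + (2 * a * b) * s"
      unfolding ab(1) sq[symmetric] by algebra
    finally have "s = (real (\<Prod>T) - (a * a + real p * (b * b))) / (2 * a * b)"
      using 3 by (simp add: field_simps)
    moreover have "real (\<Prod>T) - (a * a + real p * (b * b)) \<in> sqrt_field ps"
      "2 * a * b \<in> sqrt_field ps"
      using ab
      by (simp_all add: sqrt_field_mult sqrt_field_add sqrt_field_diff sqrt_field_Rats del: of_nat_prod)
    ultimately show False
      using s_notin sqrt_field_divide[OF inverse] by metis
  qed
qed

(* The two statements are proved together: the step for inverses needs sqrt p outside the
   smaller field, and the step for products of square roots needs division in it. *)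
lemma sqrt_field_inverse_and_sqrt_prod_notin:
  assumes "distinct ps" "\<forall>p\<in>set ps. prime p"
  shows "(\<forall>x\<in>sqrt_field ps. x \<noteq> 0 \<longrightarrow> inverse x \<in> sqrt_field ps) \<and>
    (\<forall>T. finite T \<and> T \<noteq> {} \<and> (\<forall>t\<in>T. prime t) \<and> T \<inter> set ps = {} \<longrightarrow>
      sqrt_prod T \<notin> sqrt_field ps)"
  using assms
proof (induction ps)
  case Nil
  show ?case
    using sqrt_prod_irrational by (auto simp: Rats_inverse)
next
  case (Cons p ps)
  then have p: "prime p" "p \<notin> set ps"
    and inverse: "\<And>x. x \<in> sqrt_field ps \<Longrightarrow> x \<noteq> 0 \<Longrightarrow> inverse x \<in> sqrt_field ps"
    and notin: "\<And>T. finite T \<Longrightarrow> T \<noteq> {} \<Longrightarrow> \<forall>t\<in>T. prime t \<Longrightarrow> T \<inter> set ps = {} \<Longrightarrow>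
      sqrt_prod T \<notin> sqrt_field ps"
    by auto
  have "sqrt (real p) \<notin> sqrt_field ps"
    using notin[of "{p}"] p by (simp add: sqrt_prod_def)
  then show ?case
    using sqrt_field_Cons_inverse[OF inverse] sqrt_prod_notin_sqrt_field_Cons[OF inverse notin p]
    by blast
qed

lemma sqrt_field_inverse:
  assumes "distinct ps" "\<forall>p\<in>set ps. prime p" "x \<in> sqrt_field ps" "x \<noteq> 0"
  shows "inverse x \<in> sqrt_field ps"
  using sqrt_field_inverse_and_sqrt_prod_notin assms by blast

lemma sqrt_notin_sqrt_field:
  assumes "distinct ps" "\<forall>p\<in>set ps. prime p" "prime p" "p \<notin> set ps"
  shows "sqrt (real p) \<notin> sqrt_field ps"
  using sqrt_field_inverse_and_sqrt_prod_notin[OF assms(1,2)] assms(3,4)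
  by (auto simp: sqrt_prod_def dest: spec[of _ "{p}"])

lemma sum_Pow_insert:
  assumes "finite A" "a \<notin> A"
  shows "(\<Sum>S\<in>Pow (insert a A). f S) = (\<Sum>S\<in>Pow A. f S) + (\<Sum>S\<in>Pow A. f (insert a S))"
proof -
  have "inj_on (insert a) (Pow A)"
    using assms(2) by (intro inj_onI) (metis PowD insert_ident subsetD)
  then show ?thesis
    using assms unfolding Pow_insert
    by (subst sum.union_disjoint) (auto simp: sum.reindex)
qed

lemma add_mult_sqrt_eq_0_iff:
  assumes "distinct ps" "\<forall>q\<in>set ps. prime q" "prime p" "p \<notin> set ps"
    and "a \<in> sqrt_field ps" "b \<in> sqrt_field ps"
  shows "a + b * sqrt (real p) = 0 \<longleftrightarrow> a = 0 \<and> b = 0"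
proof
  assume sum: "a + b * sqrt (real p) = 0"
  have "b = 0"
  proof (rule ccontr)
    assume "b \<noteq> 0"
    then have "sqrt (real p) = - a * inverse b"
      using sum by (simp add: field_simps)
    moreover have "- a * inverse b \<in> sqrt_field ps"
      using assms(5,6) \<open>b \<noteq> 0\<close>
      by (simp add: sqrt_field_mult sqrt_field_uminus sqrt_field_inverse[OF assms(1,2)])
    ultimately show False
      using sqrt_notin_sqrt_field[OF assms(1-4)] by simp
  qed
  with sum show "a = 0 \<and> b = 0"
    by simp
qed simp

lemma sqrt_prod_combination_in_sqrt_field:
  "(\<And>S. S \<subseteq> set ps \<Longrightarrow> c S \<in> \<rat>) \<Longrightarrow> (\<Sum>S\<in>Pow (set ps). c S * sqrt_prod S) \<in> sqrt_field ps"
  by (intro sqrt_field_sum sqrt_field_mult) (simp_all add: sqrt_field_Rats sqrt_prod_in_sqrt_field)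

lemma sum_Pow_insert_sqrt_prod:
  assumes "finite P" "p \<notin> P"
  shows "(\<Sum>S\<in>Pow (insert p P). c S * sqrt_prod S)
    = (\<Sum>S\<in>Pow P. c S * sqrt_prod S) + (\<Sum>S\<in>Pow P. c (insert p S) * sqrt_prod S) * sqrt (real p)"
proof -
  have "(\<Sum>S\<in>Pow P. c (insert p S) * sqrt_prod (insert p S))
      = (\<Sum>S\<in>Pow P. c (insert p S) * sqrt_prod S) * sqrt (real p)"
    unfolding sum_distrib_right
  proof (rule sum.cong[OF refl])
    fix S assume "S \<in> Pow P"
    then have "finite S" "p \<notin> S"
      using assms finite_subset by auto
    then show "c (insert p S) * sqrt_prod (insert p S)
        = c (insert p S) * sqrt_prod S * sqrt (real p)"
      by (simp add: sqrt_prod_insert)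
  qed
  then show ?thesis
    using assms by (simp add: sum_Pow_insert)
qed

lemma sqrt_prod_lin_independent:
  assumes "finite P" "\<forall>p\<in>P. prime p" "\<And>S. S \<subseteq> P \<Longrightarrow> c S \<in> \<rat>"
    and "(\<Sum>S\<in>Pow P. c S * sqrt_prod S) = 0" "S \<subseteq> P"
  shows "c S = 0"
  using assms
proof (induction P arbitrary: c S rule: finite_induct)
  case empty
  then show ?case
    by (simp add: sqrt_prod_def)
next
  case (insert p P)
  obtain ps where ps: "set ps = P" "distinct ps"
    using finite_distinct_list[OF insert.hyps(1)] by blast
  have rat: "c S \<in> \<rat>" "c (insert p S) \<in> \<rat>" if "S \<subseteq> P" for S
    using that insert.prems(2) by (meson subset_insertI2 insert_mono)+
  have "(\<Sum>S\<in>Pow P. c S * sqrt_prod S) = 0 \<and> (\<Sum>S\<in>Pow P. c (insert p S) * sqrt_prod S) = 0"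
    using insert ps rat
    by (subst add_mult_sqrt_eq_0_iff[symmetric, of ps])
      (auto simp: sum_Pow_insert_sqrt_prod intro!: sqrt_prod_combination_in_sqrt_field)
  then have c: "c S = 0" "c (insert p S) = 0" if "S \<subseteq> P" for S
    using insert.IH[of c S] insert.IH[of "\<lambda>S. c (insert p S)" S] insert.prems(1) rat that by auto
  show ?case
  proof (cases "p \<in> S")
    case True
    then show ?thesis
      using c(2)[of "S - {p}"] insert.prems(4) by (simp add: insert_absorb subset_insert_iff)
  next
    case False
    then show ?thesis
      using c(1) insert.prems(4) by (simp add: subset_insert)
  qed
qed

lemma sqrt_primes_lin_independent:
  assumes "finite J" "inj_on p J" "\<forall>j\<in>J. prime (p j)" "\<forall>j\<in>J. c j \<in> \<rat>"
    and "(\<Sum>j\<in>J. c j * sqrt (real (p j))) = 0" "j \<in> J"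
  shows "c j = 0"
proof -
  define C where "C S = (\<Sum>i\<in>{i\<in>J. {p i} = S}. c i)" for S
  have "(\<Sum>S\<in>Pow (p ` J). C S * sqrt_prod S)
      = (\<Sum>S\<in>Pow (p ` J). \<Sum>i\<in>{i\<in>J. {p i} = S}. c i * sqrt_prod {p i})"
    unfolding C_def sum_distrib_right by (intro sum.cong refl) auto
  also have "\<dots> = (\<Sum>i\<in>J. c i * sqrt_prod {p i})"
    by (rule sum.group) (use assms(1) in auto)
  also have "\<dots> = 0"
    using assms(5) by (simp add: sqrt_prod_def)
  finally have "C {p j} = 0"
    by (intro sqrt_prod_lin_independent[of "p ` J" C])
      (use assms in \<open>auto simp: C_def intro!: Rats_sum\<close>)
  moreover have "{i\<in>J. {p i} = {p j}} = {j}"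
    using assms(2,6) by (auto dest: inj_onD)
  ultimately show ?thesis
    by (simp add: C_def)
qed

section \<open>Conjugates of sums of square roots\<close>

definition sqrt_choice :: "nat set \<Rightarrow> (nat \<Rightarrow> real) \<Rightarrow> bool" where
  "sqrt_choice P s \<longleftrightarrow> (\<forall>t\<in>P. (s t)\<^sup>2 = real t)"

(* Integer polynomials in square roots s t of the elements t of P, reduced modulo (s t)^2 = t;
   the representation is only required where s really picks square roots. *)
definition sqrt_multilinear :: "nat set \<Rightarrow> ((nat \<Rightarrow> real) \<Rightarrow> real) set" where
  "sqrt_multilinear P = {f. \<exists>c :: nat set \<Rightarrow> int. \<forall>s. sqrt_choice P s \<longrightarrow>
      f s = (\<Sum>S\<in>Pow P. of_int (c S) * (\<Prod>t\<in>S. s t))}"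

lemma sqrt_multilinearI:
  "(\<And>s. sqrt_choice P s \<Longrightarrow> f s = (\<Sum>S\<in>Pow P. of_int (c S) * (\<Prod>t\<in>S. s t))) \<Longrightarrow>
    f \<in> sqrt_multilinear P"
  unfolding sqrt_multilinear_def by blast

lemma sqrt_multilinearE:
  assumes "f \<in> sqrt_multilinear P"
  obtains c where "\<And>s. sqrt_choice P s \<Longrightarrow> f s = (\<Sum>S\<in>Pow P. of_int (c S) * (\<Prod>t\<in>S. s t))"
  using assms unfolding sqrt_multilinear_def by blast

lemma sqrt_multilinear_cong:
  "g \<in> sqrt_multilinear P \<Longrightarrow> (\<And>s. sqrt_choice P s \<Longrightarrow> f s = g s) \<Longrightarrow> f \<in> sqrt_multilinear P"
  by (metis sqrt_multilinearE sqrt_multilinearI)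

lemma sqrt_multilinear_monomial:
  assumes "finite P" "S \<subseteq> P"
  shows "(\<lambda>s. of_int z * (\<Prod>t\<in>S. s t)) \<in> sqrt_multilinear P"
proof (rule sqrt_multilinearI)
  fix s :: "nat \<Rightarrow> real"
  have "(\<Sum>U\<in>Pow P. of_int (if U = S then z else 0) * (\<Prod>t\<in>U. s t))
      = (\<Sum>U\<in>Pow P. if U = S then of_int z * (\<Prod>t\<in>U. s t) else 0)"
    by (intro sum.cong refl) simp
  also have "\<dots> = of_int z * (\<Prod>t\<in>S. s t)"
    using assms by simp
  finally show "of_int z * (\<Prod>t\<in>S. s t) = (\<Sum>U\<in>Pow P. of_int (if U = S then z else 0) * (\<Prod>t\<in>U. s t))"
    by simp
qed

lemma sqrt_multilinear_const: "finite P \<Longrightarrow> r \<in> \<int> \<Longrightarrow> (\<lambda>s. r) \<in> sqrt_multilinear P"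
  by (elim Ints_cases) (use sqrt_multilinear_monomial[of P "{}"] in simp)

lemma sqrt_multilinear_var: "finite P \<Longrightarrow> u \<in> P \<Longrightarrow> (\<lambda>s. s u) \<in> sqrt_multilinear P"
  using sqrt_multilinear_monomial[of P "{u}" 1] by simp

lemma sqrt_multilinear_add:
  assumes "f \<in> sqrt_multilinear P" "g \<in> sqrt_multilinear P"
  shows "(\<lambda>s. f s + g s) \<in> sqrt_multilinear P"
proof -
  obtain a b where
    a: "\<And>s. sqrt_choice P s \<Longrightarrow> f s = (\<Sum>S\<in>Pow P. of_int (a S) * (\<Prod>t\<in>S. s t))" and
    b: "\<And>s. sqrt_choice P s \<Longrightarrow> g s = (\<Sum>S\<in>Pow P. of_int (b S) * (\<Prod>t\<in>S. s t))"
    using assms by (metis sqrt_multilinearE)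
  show ?thesis
    by (rule sqrt_multilinearI[where c = "\<lambda>S. a S + b S"])
      (simp add: a b distrib_right sum.distrib)
qed

lemma sqrt_multilinear_sum:
  assumes "finite P" "\<And>i. i \<in> I \<Longrightarrow> F i \<in> sqrt_multilinear P"
  shows "(\<lambda>s. \<Sum>i\<in>I. F i s) \<in> sqrt_multilinear P"
  using assms(2)
proof (induction I rule: infinite_finite_induct)
  case (insert i I)
  then show ?case
    by (simp add: sqrt_multilinear_add)
qed (simp_all add: sqrt_multilinear_const assms(1))

lemma prod_sqrt_choice_mult:
  assumes "finite P" "S \<subseteq> P" "T \<subseteq> P" "sqrt_choice P s"
  shows "(\<Prod>t\<in>S. s t) * (\<Prod>t\<in>T. s t) = real (\<Prod>(S \<inter> T)) * (\<Prod>t\<in>(S - T) \<union> (T - S). s t)"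
proof -
  have finite: "finite S" "finite T"
    using assms finite_subset by auto
  have "(\<Prod>t\<in>S. s t) = (\<Prod>t\<in>S - T. s t) * (\<Prod>t\<in>S \<inter> T. s t)"
    "(\<Prod>t\<in>T. s t) = (\<Prod>t\<in>T - S. s t) * (\<Prod>t\<in>S \<inter> T. s t)"
    using finite by (metis Int_commute prod.Int_Diff mult.commute)+
  moreover have "(\<Prod>t\<in>S \<inter> T. s t) * (\<Prod>t\<in>S \<inter> T. s t) = real (\<Prod>(S \<inter> T))"
    using assms(2,4) unfolding sqrt_choice_def
    by (simp add: power2_eq_square flip: prod.distrib) (intro prod.cong; auto)
  moreover have "(\<Prod>t\<in>(S - T) \<union> (T - S). s t) = (\<Prod>t\<in>S - T. s t) * (\<Prod>t\<in>T - S. s t)"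
    using finite by (intro prod.union_disjoint) auto
  ultimately show ?thesis
    by (simp only: mult_ac)
qed

lemma sqrt_multilinear_mult:
  assumes "finite P" "f \<in> sqrt_multilinear P" "g \<in> sqrt_multilinear P"
  shows "(\<lambda>s. f s * g s) \<in> sqrt_multilinear P"
proof -
  obtain a b where
    a: "\<And>s. sqrt_choice P s \<Longrightarrow> f s = (\<Sum>S\<in>Pow P. of_int (a S) * (\<Prod>t\<in>S. s t))" and
    b: "\<And>s. sqrt_choice P s \<Longrightarrow> g s = (\<Sum>S\<in>Pow P. of_int (b S) * (\<Prod>t\<in>S. s t))"
    using assms by (metis sqrt_multilinearE)
  define h where "h S T s = of_int (a S * b T * int (\<Prod>(S \<inter> T))) * (\<Prod>t\<in>(S - T) \<union> (T - S). s t)"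
    for S T and s :: "nat \<Rightarrow> real"
  have "(\<lambda>s. \<Sum>S\<in>Pow P. \<Sum>T\<in>Pow P. h S T s) \<in> sqrt_multilinear P"
    unfolding h_def using assms(1)
    by (intro sqrt_multilinear_sum sqrt_multilinear_monomial) auto
  moreover have "f s * g s = (\<Sum>S\<in>Pow P. \<Sum>T\<in>Pow P. h S T s)" if "sqrt_choice P s" for s
    unfolding a[OF that] b[OF that] sum_product h_def
    using prod_sqrt_choice_mult[OF assms(1) _ _ that]
    by (intro sum.cong refl) (simp add: algebra_simps)
  ultimately show ?thesis
    by (rule sqrt_multilinear_cong)
qed

lemma sqrt_multilinear_prod:
  assumes "finite P" "\<And>i. i \<in> I \<Longrightarrow> F i \<in> sqrt_multilinear P"
  shows "(\<lambda>s. \<Prod>i\<in>I. F i s) \<in> sqrt_multilinear P"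
  using assms(2)
proof (induction I rule: infinite_finite_induct)
  case (insert i I)
  then show ?case
    by (simp add: sqrt_multilinear_mult assms(1))
qed (simp_all add: sqrt_multilinear_const assms(1))

lemma sqrt_multilinear_power:
  "finite P \<Longrightarrow> f \<in> sqrt_multilinear P \<Longrightarrow> (\<lambda>s. f s ^ n) \<in> sqrt_multilinear P"
  by (induction n) (simp_all add: sqrt_multilinear_const sqrt_multilinear_mult)

lemma sqrt_multilinear_eq_0_if_eq_0_at_sqrt:
  assumes "finite P" "\<forall>t\<in>P. prime t" "f \<in> sqrt_multilinear P"
    and "f (\<lambda>t. sqrt (real t)) = 0" "sqrt_choice P s"
  shows "f s = 0"
proof -
  obtain c where c: "\<And>s. sqrt_choice P s \<Longrightarrow> f s = (\<Sum>S\<in>Pow P. of_int (c S) * (\<Prod>t\<in>S. s t))"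
    using assms(3) by (metis sqrt_multilinearE)
  have "(\<Sum>S\<in>Pow P. of_int (c S) * sqrt_prod S) = 0"
    using assms(4) c[of "\<lambda>t. sqrt (real t)"] by (simp add: sqrt_choice_def sqrt_prod_def)
  then have "of_int (c S) = (0 :: real)" if "S \<subseteq> P" for S
    using assms(1,2) that by (intro sqrt_prod_lin_independent) auto
  then show ?thesis
    using c[OF assms(5)] by simp
qed

section \<open>Polynomials vanishing on grids\<close>

lemma coeffs_eq_0_if_vanishes_on_large_set:
  fixes a :: "nat \<Rightarrow> real"
  assumes "D < card A" "\<And>t. t \<in> A \<Longrightarrow> (\<Sum>i\<le>D. a i * t ^ i) = 0" "j \<le> D"
  shows "a j = 0"
proof -
  define f where "f = (\<Sum>i\<le>D. monom (a i) i)"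
  have "degree f \<le> D"
    unfolding f_def by (intro degree_sum_le order_trans[OF degree_monom_le]) auto
  moreover have "poly f t = (\<Sum>i\<le>D. a i * t ^ i)" for t
    by (simp add: f_def poly_sum poly_monom)
  ultimately have "f = 0"
    using assms(1,2) by (intro poly_eqI_degree[of A]) auto
  moreover have "coeff f j = a j"
    using assms(3) by (simp add: f_def coeff_sum coeff_monom)
  ultimately show ?thesis
    by simp
qed

lemma sum_monomials_collect_last_var:
  fixes c :: "(nat \<Rightarrow>\<^sub>0 nat) \<Rightarrow> real"
  assumes "finite M" "\<And>m. m \<in> M \<Longrightarrow> Poly_Mapping.lookup m n \<le> D"
  shows "(\<Sum>m\<in>M. c m * (\<Prod>i<Suc n. (x(n := t)) i ^ Poly_Mapping.lookup m i))
    = (\<Sum>j\<le>D. (\<Sum>m\<in>{m\<in>M. Poly_Mapping.lookup m n = j}.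
        c m * (\<Prod>i<n. x i ^ Poly_Mapping.lookup m i)) * t ^ j)"
proof -
  have "(\<Sum>j\<le>D. (\<Sum>m\<in>{m\<in>M. Poly_Mapping.lookup m n = j}.
        c m * (\<Prod>i<n. x i ^ Poly_Mapping.lookup m i)) * t ^ j)
      = (\<Sum>j\<le>D. \<Sum>m\<in>{m\<in>M. Poly_Mapping.lookup m n = j}.
        c m * (\<Prod>i<n. x i ^ Poly_Mapping.lookup m i) * t ^ Poly_Mapping.lookup m n)"
    unfolding sum_distrib_right by (intro sum.cong refl) auto
  also have "\<dots> = (\<Sum>m\<in>M. c m * (\<Prod>i<n. x i ^ Poly_Mapping.lookup m i) * t ^ Poly_Mapping.lookup m n)"
    using assms by (intro sum.group) auto
  also have "\<dots> = (\<Sum>m\<in>M. c m * (\<Prod>i<Suc n. (x(n := t)) i ^ Poly_Mapping.lookup m i))"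
    by (intro sum.cong refl) (simp add: lessThan_Suc mult.assoc)
  finally show ?thesis ..
qed

lemma coeffs_eq_0_if_vanishes_on_grid:
  fixes M :: "(nat \<Rightarrow>\<^sub>0 nat) set" and c :: "(nat \<Rightarrow>\<^sub>0 nat) \<Rightarrow> real" and A :: "nat \<Rightarrow> real set"
  assumes "finite M"
    and "\<And>m m'. m \<in> M \<Longrightarrow> m' \<in> M \<Longrightarrow>
      (\<forall>i<n. Poly_Mapping.lookup m i = Poly_Mapping.lookup m' i) \<Longrightarrow> m = m'"
    and "\<And>m i. m \<in> M \<Longrightarrow> i < n \<Longrightarrow> Poly_Mapping.lookup m i \<le> d i"
    and "\<And>i. i < n \<Longrightarrow> d i < card (A i)"
    and "\<And>x. (\<And>i. i < n \<Longrightarrow> x i \<in> A i) \<Longrightarrow>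
      (\<Sum>m\<in>M. c m * (\<Prod>i<n. x i ^ Poly_Mapping.lookup m i)) = 0"
    and "m \<in> M"
  shows "c m = 0"
  using assms
proof (induction n arbitrary: M m)
  case 0
  then have "M = {m}"
    by blast
  then show ?case
    using "0.prems"(5) by simp
next
  case (Suc n)
  define M' where "M' = {m'\<in>M. Poly_Mapping.lookup m' n = Poly_Mapping.lookup m n}"
  show ?case
  proof (rule Suc.IH[of M'])
    show "finite M'" "m \<in> M'"
      using Suc.prems(1,6) by (simp_all add: M'_def)
    show "m1 = m2"
      if "m1 \<in> M'" "m2 \<in> M'" "\<forall>i<n. Poly_Mapping.lookup m1 i = Poly_Mapping.lookup m2 i" for m1 m2
      using that Suc.prems(2)[of m1 m2] by (auto simp: M'_def less_Suc_eq)
    show "Poly_Mapping.lookup m' i \<le> d i" if "m' \<in> M'" "i < n" for m' i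
      using that Suc.prems(3) by (simp add: M'_def)
    show "d i < card (A i)" if "i < n" for i
      using that Suc.prems(4) by simp
    show "(\<Sum>m'\<in>M'. c m' * (\<Prod>i<n. x i ^ Poly_Mapping.lookup m' i)) = 0"
      if x: "\<And>i. i < n \<Longrightarrow> x i \<in> A i" for x
    proof -
      have bound: "\<And>m'. m' \<in> M \<Longrightarrow> Poly_Mapping.lookup m' n \<le> d n"
        using Suc.prems(3) by simp
      have vanish: "(\<Sum>j\<le>d n. (\<Sum>m'\<in>{m'\<in>M. Poly_Mapping.lookup m' n = j}.
          c m' * (\<Prod>i<n. x i ^ Poly_Mapping.lookup m' i)) * t ^ j) = 0" if "t \<in> A n" for t
      proof -
        have "(\<Sum>m'\<in>M. c m' * (\<Prod>i<Suc n. (x(n := t)) i ^ Poly_Mapping.lookup m' i)) = 0"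
          using that x by (intro Suc.prems(5)) (auto simp: less_Suc_eq)
        then show ?thesis
          by (simp only: sum_monomials_collect_last_var[OF Suc.prems(1) bound])
      qed
      have "(\<Sum>m'\<in>{m'\<in>M. Poly_Mapping.lookup m' n = Poly_Mapping.lookup m n}.
          c m' * (\<Prod>i<n. x i ^ Poly_Mapping.lookup m' i)) = 0"
        by (rule coeffs_eq_0_if_vanishes_on_large_set[OF Suc.prems(4)[of n] vanish])
          (use Suc.prems(6) bound in simp_all)
      then show ?thesis
        by (simp add: M'_def)
    qed
  qed
qed

lemma mpoly_eval_eq_sum_prod_lessThan:
  assumes "\<forall>\<alpha>\<in>Poly_Mapping.keys Q. Poly_Mapping.keys \<alpha> \<subseteq> {..<q}"
  shows "mpoly_eval Q x =
    (\<Sum>m\<in>Poly_Mapping.keys Q. of_int (Poly_Mapping.lookup Q m) * (\<Prod>i<q. x i ^ Poly_Mapping.lookup m i))"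
  unfolding mpoly_eval_def monom_eval_def
proof (intro sum.cong refl arg_cong2[where f = "(*)"])
  fix m assume "m \<in> Poly_Mapping.keys Q"
  then show "(\<Prod>i\<in>Poly_Mapping.keys m. x i ^ Poly_Mapping.lookup m i)
      = (\<Prod>i<q. x i ^ Poly_Mapping.lookup m i)"
    using assms by (intro prod.mono_neutral_left) (auto simp: in_keys_iff)
qed

lemma mpoly_eval_cong:
  assumes "\<forall>\<alpha>\<in>Poly_Mapping.keys Q. Poly_Mapping.keys \<alpha> \<subseteq> {..<q}" "\<And>i. i < q \<Longrightarrow> x i = y i"
  shows "mpoly_eval Q x = mpoly_eval Q y"
  using assms(2) by (simp add: mpoly_eval_eq_sum_prod_lessThan[OF assms(1)])

lemma mpoly_eq_0_if_vanishes_on_grid: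
  fixes Q :: int_mpoly
  assumes vars: "\<forall>\<alpha>\<in>Poly_Mapping.keys Q. Poly_Mapping.keys \<alpha> \<subseteq> {..<q}"
    and deg: "\<forall>\<alpha>\<in>Poly_Mapping.keys Q. \<forall>i<q. Poly_Mapping.lookup \<alpha> i \<le> d i"
    and card: "\<And>i. i < q \<Longrightarrow> d i < card (A i)"
    and vanish: "\<And>x. (\<And>i. i < q \<Longrightarrow> x i \<in> A i) \<Longrightarrow> mpoly_eval Q x = 0"
  shows "Q = 0"
proof -
  have "of_int (Poly_Mapping.lookup Q m) = (0 :: real)" if "m \<in> Poly_Mapping.keys Q" for m
  proof (rule coeffs_eq_0_if_vanishes_on_grid[of "Poly_Mapping.keys Q" q])
    show "m1 = m2" if "m1 \<in> Poly_Mapping.keys Q" "m2 \<in> Poly_Mapping.keys Q"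
      and "\<forall>i<q. Poly_Mapping.lookup m1 i = Poly_Mapping.lookup m2 i" for m1 m2
    proof (rule poly_mapping_eqI)
      fix i
      show "Poly_Mapping.lookup m1 i = Poly_Mapping.lookup m2 i"
      proof (cases "i < q")
        case False
        then have "i \<notin> Poly_Mapping.keys m1" "i \<notin> Poly_Mapping.keys m2"
          using that(1,2) vars by auto
        then show ?thesis
          by (simp add: in_keys_iff)
      qed (use that(3) in simp)
    qed
    show "(\<Sum>m\<in>Poly_Mapping.keys Q.
        of_int (Poly_Mapping.lookup Q m) * (\<Prod>i<q. x i ^ Poly_Mapping.lookup m i)) = 0"
      if "\<And>i. i < q \<Longrightarrow> x i \<in> A i" for x
      using vanish[OF that] by (simp add: mpoly_eval_eq_sum_prod_lessThan[OF vars])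
  qed (use that deg card in auto)
  then have "Poly_Mapping.lookup Q m = 0" for m
    by (cases "m \<in> Poly_Mapping.keys Q") (simp_all add: in_keys_iff)
  then show ?thesis
    by (intro poly_mapping_eqI) simp
qed

section \<open>Signed sums of square roots\<close>

lemma less_two_power_ceiling_log: "n < 2 ^ nat \<lceil>log 2 (real (n + 1))\<rceil>"
proof -
  have "log 2 (real (n + 1)) \<le> real (nat \<lceil>log 2 (real (n + 1))\<rceil>)"
    by linarith
  then have "real (n + 1) \<le> 2 powr real (nat \<lceil>log 2 (real (n + 1))\<rceil>)"
    by (subst (asm) log_le_iff) auto
  also have "\<dots> = 2 ^ nat \<lceil>log 2 (real (n + 1))\<rceil>"
    by (rule powr_realpow) simp
  finally have "n + 1 \<le> 2 ^ nat \<lceil>log 2 (real (n + 1))\<rceil>"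
    by (metis of_nat_le_iff of_nat_numeral of_nat_power)
  then show ?thesis
    by simp
qed

definition signed_sqrt_sums :: "nat \<Rightarrow> (nat \<Rightarrow> nat) \<Rightarrow> real set" where
  "signed_sqrt_sums k p = (\<lambda>\<sigma>. \<Sum>j<k. \<sigma> j * sqrt (real (p j))) ` ({..<k} \<rightarrow>\<^sub>E {-1, 1})"

lemma card_signed_sqrt_sums:
  assumes "inj_on p {..<k}" "\<And>j. j < k \<Longrightarrow> prime (p j)"
  shows "card (signed_sqrt_sums k p) = 2 ^ k"
proof -
  have "inj_on (\<lambda>\<sigma>. \<Sum>j<k. \<sigma> j * sqrt (real (p j))) ({..<k} \<rightarrow>\<^sub>E {-1, 1})"
  proof (rule inj_onI)
    fix \<sigma> \<tau> :: "nat \<Rightarrow> real"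
    assume \<sigma>: "\<sigma> \<in> {..<k} \<rightarrow>\<^sub>E {-1, 1}" and \<tau>: "\<tau> \<in> {..<k} \<rightarrow>\<^sub>E {-1, 1}"
      and eq: "(\<Sum>j<k. \<sigma> j * sqrt (real (p j))) = (\<Sum>j<k. \<tau> j * sqrt (real (p j)))"
    have "(\<Sum>j<k. (\<sigma> j - \<tau> j) * sqrt (real (p j))) = 0"
      using eq by (simp add: left_diff_distrib sum_subtractf)
    moreover have "\<forall>j\<in>{..<k}. \<sigma> j - \<tau> j \<in> \<rat>"
    proof
      fix j assume "j \<in> {..<k}"
      then have "\<sigma> j \<in> {-1, 1}" "\<tau> j \<in> {-1, 1}"
        using PiE_mem[OF \<sigma>] PiE_mem[OF \<tau>] by blast+
      then show "\<sigma> j - \<tau> j \<in> \<rat>"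
        by (auto intro: Rats_diff)
    qed
    ultimately have "\<sigma> j - \<tau> j = 0" if "j < k" for j
      using assms that by (intro sqrt_primes_lin_independent[of "{..<k}" p "\<lambda>j. \<sigma> j - \<tau> j"]) auto
    then show "\<sigma> = \<tau>"
      using \<sigma> \<tau> by (intro PiE_ext) auto
  qed
  moreover have "card ({..<k} \<rightarrow>\<^sub>E {-1, 1 :: real}) = 2 ^ k"
    by (simp add: card_PiE numeral_2_eq_2)
  ultimately show ?thesis
    by (simp add: signed_sqrt_sums_def card_image)
qed
lemma mpoly_eval_sqrt_multilinear:
  fixes Q :: int_mpoly
  assumes P: "finite P"
    and vars: "\<forall>\<alpha>\<in>Poly_Mapping.keys Q. Poly_Mapping.keys \<alpha> \<subseteq> {..<q}"
    and F: "\<And>i. i < q \<Longrightarrow> F i \<in> sqrt_multilinear P"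
  shows "(\<lambda>s. mpoly_eval Q (\<lambda>i. F i s)) \<in> sqrt_multilinear P"
  unfolding mpoly_eval_def monom_eval_def
proof (rule sqrt_multilinear_sum[OF P])
  fix m assume "m \<in> Poly_Mapping.keys Q"
  then have "(\<lambda>s. \<Prod>i\<in>Poly_Mapping.keys m. F i s ^ Poly_Mapping.lookup m i) \<in> sqrt_multilinear P"
    using vars F by (intro sqrt_multilinear_prod[OF P] sqrt_multilinear_power[OF P]) auto
  then show "(\<lambda>s. of_int (Poly_Mapping.lookup Q m) *
      (\<Prod>i\<in>Poly_Mapping.keys m. F i s ^ Poly_Mapping.lookup m i)) \<in> sqrt_multilinear P"
    by (intro sqrt_multilinear_mult[OF P] sqrt_multilinear_const[OF P]) simp_all
qed

lemma mpoly_eval_signed_sqrt_sums_eq_0: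
  fixes Q :: int_mpoly and \<sigma> \<tau> :: "nat \<Rightarrow> nat \<Rightarrow> real"
  assumes vars: "\<forall>\<alpha>\<in>Poly_Mapping.keys Q. Poly_Mapping.keys \<alpha> \<subseteq> {..<q}"
    and primes: "\<forall>i<q. \<forall>j<k i. prime (p i j)"
    and distinct: "inj_on (\<lambda>(i, j). p i j) (SIGMA i:{..<q}. {..<k i})"
    and signs: "\<And>i j. i < q \<Longrightarrow> j < k i \<Longrightarrow> \<sigma> i j \<in> {-1, 1} \<and> \<tau> i j \<in> {-1, 1}"
    and zero: "mpoly_eval Q (\<lambda>i. \<Sum>j<k i. \<sigma> i j * sqrt (real (p i j))) = 0"
  shows "mpoly_eval Q (\<lambda>i. \<Sum>j<k i. \<tau> i j * sqrt (real (p i j))) = 0"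
proof -
  define I where "I = (SIGMA i:{..<q}. {..<k i})"
  define P where "P = (\<lambda>(i, j). p i j) ` I"
  have P: "finite P" "\<forall>t\<in>P. prime t" "\<And>i j. i < q \<Longrightarrow> j < k i \<Longrightarrow> p i j \<in> P"
    using primes by (auto simp: P_def I_def)
  define f where "f s = mpoly_eval Q (\<lambda>i. \<Sum>j<k i. \<sigma> i j * s (p i j))" for s
  have "\<sigma> i j \<in> \<int>" if "i < q" "j < k i" for i j
    using signs[OF that] by auto
  then have coordinate: "(\<lambda>s. \<Sum>j<k i. \<sigma> i j * s (p i j)) \<in> sqrt_multilinear P" if "i < q" for i
    using that by (intro sqrt_multilinear_sum[OF P(1)] sqrt_multilinear_mult[OF P(1)]
        sqrt_multilinear_const[OF P(1)] sqrt_multilinear_var[OF P(1)] P(3)) auto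
  have "f \<in> sqrt_multilinear P"
    unfolding f_def by (intro mpoly_eval_sqrt_multilinear[OF P(1) vars] coordinate)
  \<comment> \<open>the choice of square roots that turns the signs \<sigma> into \<tau>\<close>
  define s where
    "s t = (case the_inv_into I (\<lambda>(i, j). p i j) t of (i, j) \<Rightarrow> \<sigma> i j * \<tau> i j) * sqrt (real t)" for t
  have s: "s (p i j) = \<sigma> i j * \<tau> i j * sqrt (real (p i j))" if "i < q" "j < k i" for i j
    using the_inv_into_f_f[OF distinct[folded I_def], of "(i, j)"] that by (simp add: s_def I_def)
  have "sqrt_choice P s"
    unfolding sqrt_choice_def
  proof
    fix t assume "t \<in> P"
    then obtain i j where ij: "i < q" "j < k i" "t = p i j"
      by (auto simp: P_def I_def)
    have "(\<sigma> i j * \<tau> i j)\<^sup>2 = 1"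
      using signs[OF ij(1,2)] by auto
    then show "(s t)\<^sup>2 = real t"
      using ij by (simp add: s power_mult_distrib)
  qed
  then have "f s = 0"
    using P(1,2) zero \<open>f \<in> sqrt_multilinear P\<close>
    by (intro sqrt_multilinear_eq_0_if_eq_0_at_sqrt[of P f s]) (simp_all add: f_def)
  moreover have "f s = mpoly_eval Q (\<lambda>i. \<Sum>j<k i. \<tau> i j * sqrt (real (p i j)))"
    unfolding f_def
  proof (intro mpoly_eval_cong[OF vars] sum.cong refl)
    fix i j assume "i < q" "j \<in> {..<k i}"
    moreover from this have "\<sigma> i j * \<sigma> i j = 1"
      using signs[of i j] by auto
    ultimately show "\<sigma> i j * s (p i j) = \<tau> i j * sqrt (real (p i j))"
      by (simp add: s flip: mult.assoc)
  qed
  ultimately show ?thesis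
    by simp
qed

lemma mpoly_eval_eq_0_on_signed_sqrt_sums:
  fixes Q :: int_mpoly and \<sigma> :: "nat \<Rightarrow> nat \<Rightarrow> real"
  assumes vars: "\<forall>\<alpha>\<in>Poly_Mapping.keys Q. Poly_Mapping.keys \<alpha> \<subseteq> {..<q}"
    and primes: "\<forall>i<q. \<forall>j<k i. prime (p i j)"
    and distinct: "inj_on (\<lambda>(i, j). p i j) (SIGMA i:{..<q}. {..<k i})"
    and signs: "\<And>i j. i < q \<Longrightarrow> j < k i \<Longrightarrow> \<sigma> i j \<in> {-1, 1}"
    and zero: "mpoly_eval Q (\<lambda>i. \<Sum>j<k i. \<sigma> i j * sqrt (real (p i j))) = 0"
    and x: "\<And>i. i < q \<Longrightarrow> x i \<in> signed_sqrt_sums (k i) (p i)"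
  shows "mpoly_eval Q x = 0"
proof -
  have "\<forall>i\<in>{..<q}. \<exists>\<tau>. \<tau> \<in> {..<k i} \<rightarrow>\<^sub>E {-1, 1} \<and> x i = (\<Sum>j<k i. \<tau> j * sqrt (real (p i j)))"
    using x unfolding signed_sqrt_sums_def by blast
  then obtain \<tau> where \<tau>: "\<forall>i\<in>{..<q}. \<tau> i \<in> {..<k i} \<rightarrow>\<^sub>E {-1, 1} \<and>
      x i = (\<Sum>j<k i. \<tau> i j * sqrt (real (p i j)))"
    by (metis bchoice)
  have "mpoly_eval Q (\<lambda>i. \<Sum>j<k i. \<tau> i j * sqrt (real (p i j))) = 0"
    using zero by (rule mpoly_eval_signed_sqrt_sums_eq_0[OF vars primes distinct, rotated])
      (use signs \<tau> in \<open>auto simp: PiE_iff\<close>)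
  then show ?thesis
    using \<tau> by (subst mpoly_eval_cong[OF vars]) simp_all
qed

theorem lemma2p1:
  fixes Q :: int_mpoly and q :: nat and d :: "nat \<Rightarrow> nat"
    and p :: "nat \<Rightarrow> nat \<Rightarrow> nat" and b :: "nat \<Rightarrow> nat \<Rightarrow> bool"
    and k :: "nat \<Rightarrow> nat" and \<pi> :: "nat \<Rightarrow> real"
  assumes vars: "\<forall>\<alpha>\<in>Poly_Mapping.keys Q. Poly_Mapping.keys \<alpha> \<subseteq> {..<q}"
    and deg: "\<forall>\<alpha>\<in>Poly_Mapping.keys Q. \<forall>i<q. Poly_Mapping.lookup \<alpha> i \<le> d i"
    and k_def: "\<forall>i<q. k i = nat \<lceil>log 2 (real (d i + 1))\<rceil>"
    and primes: "\<forall>i<q. \<forall>j<k i. prime (p i j)"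
    and distinct: "inj_on (\<lambda>(i, j). p i j) (SIGMA i:{..<q}. {..<k i})"
    and pi_def: "\<forall>i<q. \<pi> i = (\<Sum>j<k i. (-1) ^ (if b i j then 1 else 0) * sqrt (real (p i j)))"
  shows "Q \<noteq> 0 \<longleftrightarrow> mpoly_eval Q \<pi> \<noteq> 0"
proof
  assume "mpoly_eval Q \<pi> \<noteq> 0"
  then show "Q \<noteq> 0"
    by (auto simp: mpoly_eval_def)
next
  assume "Q \<noteq> 0"
  have card: "d i < card (signed_sqrt_sums (k i) (p i))" if "i < q" for i
  proof -
    have "inj_on (p i) {..<k i}"
      using distinct that by (auto simp: inj_on_def)
    then show ?thesis
      using that primes k_def less_two_power_ceiling_log[of "d i"]
      by (subst card_signed_sqrt_sums) auto
  qed
  define \<sigma> where "\<sigma> i j = (-1 :: real) ^ (if b i j then 1 else 0)" for i j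
  have signs: "\<And>i j. i < q \<Longrightarrow> j < k i \<Longrightarrow> \<sigma> i j \<in> {-1, 1}"
    by (simp add: \<sigma>_def)
  have \<pi>_eq: "mpoly_eval Q \<pi> = mpoly_eval Q (\<lambda>i. \<Sum>j<k i. \<sigma> i j * sqrt (real (p i j)))"
    using pi_def by (intro mpoly_eval_cong[OF vars]) (simp add: \<sigma>_def)
  show "mpoly_eval Q \<pi> \<noteq> 0"
  proof
    assume "mpoly_eval Q \<pi> = 0"
    then have zero: "mpoly_eval Q (\<lambda>i. \<Sum>j<k i. \<sigma> i j * sqrt (real (p i j))) = 0"
      by (simp add: \<pi>_eq)
    have "Q = 0"
      using card mpoly_eval_eq_0_on_signed_sqrt_sums[OF vars primes distinct signs zero]
      by (rule mpoly_eq_0_if_vanishes_on_grid[OF vars deg])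
    with \<open>Q \<noteq> 0\<close> show False ..
  qed
qed

end
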